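(* Let $(X,A,\prec)$ be an alignment of the family $\{(X_a,\prec_a)\}_{a\in I}$ and let $\mathfrak{Q}$ be a partition of $X$ into blocks such that (i) every column $P\in\mathcal{C}(X,A)$ is contained in some block $Y\in\mathfrak{Q}$, and (ii) there is a strict partial order $\triangleleft$ on $\mathfrak{Q}$ such that for any two distinct blocks $Y',Y''$, if there are columns $P\subseteq Y'$ and $Q\subseteq Y''$ with $P\prec Q$ then $Y'\triangleleft Y''$. Define $\prec'$ on $\mathcal{C}(X,A)$ by $P\prec' Q$ if and only if either $P,Q\subseteq Y$ for some $Y\in\mathfrak{Q}$ and $P\prec Q$, or $P\subseteq Y'$, $Q\subseteq Y''$ with $Y'\triangleleft Y''$. Then $\prec'$ is a strict partial order extending $\prec$, and $(X,A,\prec')$ is an alignment of the family.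
   Context: Let $I$ be a finite index set ("rows"), and for each $a\in I$ let $(X_a,\prec_a)$ be a finite set with a strict partial order. Elements of $X_a$ are written $(a,i)$, and $X=\dot\bigcup_{a\in I}X_a$. For a simple undirected graph $(X,A)$, $\mathcal{C}(X,A)$ denotes its set of connected components ("columns"). An alignment of the family is a triple $(X,A,\prec)$ where $\prec$ is a strict partial order on $\mathcal{C}(X,A)$ such that: (P1) every $Q\in\mathcal{C}(X,A)$ induces a complete subgraph of $(X,A)$; (P2) if $(a,i)\in Q$ and $(a,j)\in Q$ then $i=j$; (P3) if $(a,i)\in P$, $(a,j)\in Q$ and $(a,i)\prec_a(a,j)$ then $P\prec Q$; (P4) if $P\prec Q$, $(a,i)\in P$ and $(a,j)\in Q$, then $(a,i)\prec_a(a,j)$ or $(a,i)$ and $(a,j)$ are incomparable w.r.t. $\prec_a$. *)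

theory Defs
  imports Main "HOL-Library.Disjoint_Sets"
begin

text \<open>Elements of X are pairs (a,i) with row a = fst (a,i). The row sets are
  X_a = {x \<in> X. fst x = a}; lt a is the strict partial order on X_a.\<close>

definition row :: "('r \<times> 'e) set \<Rightarrow> 'r \<Rightarrow> ('r \<times> 'e) set" where
  "row X a = {x \<in> X. fst x = a}"

definition strict_po_on :: "'a set \<Rightarrow> ('a \<Rightarrow> 'a \<Rightarrow> bool) \<Rightarrow> bool" where
  "strict_po_on S R \<longleftrightarrow> (\<forall>x\<in>S. \<not> R x x) \<and>
     (\<forall>x\<in>S. \<forall>y\<in>S. \<forall>z\<in>S. R x y \<longrightarrow> R y z \<longrightarrow> R x z)"

definition family :: "'r set \<Rightarrow> ('r \<times> 'e) set \<Rightarrow> ('r \<Rightarrow> ('r \<times> 'e) \<Rightarrow> ('r \<times> 'e) \<Rightarrow> bool) \<Rightarrow> bool" where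
  "family I X lt \<longleftrightarrow> finite I \<and> finite X \<and> (\<forall>x\<in>X. fst x \<in> I) \<and>
     (\<forall>a\<in>I. strict_po_on (row X a) (lt a))"

definition simple_graph :: "'a set \<Rightarrow> ('a \<Rightarrow> 'a \<Rightarrow> bool) \<Rightarrow> bool" where
  "simple_graph X A \<longleftrightarrow> (\<forall>u v. A u v \<longrightarrow> u \<in> X \<and> v \<in> X) \<and>
     (\<forall>u v. A u v \<longrightarrow> A v u) \<and> (\<forall>u. \<not> A u u)"

definition components :: "'a set \<Rightarrow> ('a \<Rightarrow> 'a \<Rightarrow> bool) \<Rightarrow> 'a set set" where
  "components X A = {{y \<in> X. (x, y) \<in> {(u, v). A u v \<and> u \<in> X \<and> v \<in> X}\<^sup>*} | x. x \<in> X}"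

definition alignment ::
  "'r set \<Rightarrow> ('r \<times> 'e) set \<Rightarrow> ('r \<Rightarrow> ('r \<times> 'e) \<Rightarrow> ('r \<times> 'e) \<Rightarrow> bool)
   \<Rightarrow> (('r \<times> 'e) \<Rightarrow> ('r \<times> 'e) \<Rightarrow> bool) \<Rightarrow> (('r \<times> 'e) set \<Rightarrow> ('r \<times> 'e) set \<Rightarrow> bool) \<Rightarrow> bool" where
  "alignment I X lt A prec \<longleftrightarrow>
     simple_graph X A \<and>
     strict_po_on (components X A) prec \<and>
     (\<forall>Q\<in>components X A. \<forall>x\<in>Q. \<forall>y\<in>Q. x \<noteq> y \<longrightarrow> A x y) \<and>
     (\<forall>Q\<in>components X A. \<forall>x\<in>Q. \<forall>y\<in>Q. fst x = fst y \<longrightarrow> x = y) \<and>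
     (\<forall>P\<in>components X A. \<forall>Q\<in>components X A. \<forall>x\<in>P. \<forall>y\<in>Q.
        fst x = fst y \<longrightarrow> lt (fst x) x y \<longrightarrow> prec P Q) \<and>
     (\<forall>P\<in>components X A. \<forall>Q\<in>components X A. prec P Q \<longrightarrow> (\<forall>x\<in>P. \<forall>y\<in>Q.
        fst x = fst y \<longrightarrow>
          lt (fst x) x y \<or> (x \<noteq> y \<and> \<not> lt (fst x) x y \<and> \<not> lt (fst x) y x)))"

end

theory Submission
  imports Defs
begin

text \<open>Inside a block the new order is the old one, between blocks it is the block order
  \<open>\<triangleleft>\<close>; since \<open>\<triangleleft>\<close> is compatible with \<open>\<prec>\<close>, this is a strict partial order
  extending \<open>\<prec>\<close>. Any such extension \<open>\<prec>'\<close> is again an alignment order: (P3) is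
  inherited, and (P4) could only fail for \<open>P \<prec>' Q\<close> and \<open>x \<in> P\<close>, \<open>y \<in> Q\<close> in one row with
  \<open>x = y\<close>, impossible as distinct columns are disjoint, or with \<open>y\<close> before \<open>x\<close>, which by (P3)
  gives \<open>Q \<prec> P\<close>, hence \<open>Q \<prec>' P\<close>, contradicting asymmetry.\<close>

lemma strict_po_onD_irrefl: "strict_po_on S R \<Longrightarrow> x \<in> S \<Longrightarrow> \<not> R x x"
  unfolding strict_po_on_def by blast

lemma strict_po_onD_trans:
  "strict_po_on S R \<Longrightarrow> x \<in> S \<Longrightarrow> y \<in> S \<Longrightarrow> z \<in> S \<Longrightarrow> R x y \<Longrightarrow> R y z \<Longrightarrow> R x z"
  unfolding strict_po_on_def by blast

lemma strict_po_on_asym: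
  "strict_po_on S R \<Longrightarrow> x \<in> S \<Longrightarrow> y \<in> S \<Longrightarrow> R x y \<Longrightarrow> \<not> R y x"
  unfolding strict_po_on_def by blast

lemma strict_po_on_cong:
  assumes "\<And>x y. x \<in> S \<Longrightarrow> y \<in> S \<Longrightarrow> R x y \<longleftrightarrow> R' x y"
  shows "strict_po_on S R \<longleftrightarrow> strict_po_on S R'"
  using assms unfolding strict_po_on_def by blast

definition block_order :: "('a \<Rightarrow> 'b) \<Rightarrow> ('a \<Rightarrow> 'a \<Rightarrow> bool) \<Rightarrow> ('b \<Rightarrow> 'b \<Rightarrow> bool) \<Rightarrow> 'a \<Rightarrow> 'a \<Rightarrow> bool"
  where "block_order blk R T x y \<longleftrightarrow> (blk x = blk y \<and> R x y) \<or> T (blk x) (blk y)"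

lemma strict_po_on_block_order:
  assumes R: "strict_po_on S R" and T: "strict_po_on B T" and blk: "blk ` S \<subseteq> B"
  shows "strict_po_on S (block_order blk R T)"
  unfolding strict_po_on_def
proof (intro conjI ballI impI)
  fix x assume "x \<in> S"
  then show "\<not> block_order blk R T x x"
    using strict_po_onD_irrefl[OF R] strict_po_onD_irrefl[OF T] blk
    unfolding block_order_def by blast
next
  fix x y z assume S: "x \<in> S" "y \<in> S" "z \<in> S"
    and "block_order blk R T x y" "block_order blk R T y z"
  then show "block_order blk R T x z"
    using strict_po_onD_trans[OF R S] strict_po_onD_trans[OF T] blk
    unfolding block_order_def by (metis image_subset_iff)
qed

lemma block_order_extends:
  assumes "\<And>x y. x \<in> S \<Longrightarrow> y \<in> S \<Longrightarrow> R x y \<Longrightarrow> blk x \<noteq> blk y \<Longrightarrow> T (blk x) (blk y)"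
    and "x \<in> S" "y \<in> S" "R x y"
  shows "block_order blk R T x y"
  using assms unfolding block_order_def by blast

lemma partition_on_block_unique:
  assumes "partition_on X \<Q>" "P \<noteq> {}" "Y \<in> \<Q>" "Y' \<in> \<Q>" "P \<subseteq> Y" "P \<subseteq> Y'"
  shows "Y = Y'"
  using assms disjointD[OF partition_onD2[OF assms(1)]] by blast

lemma components_nonempty: "P \<in> components X A \<Longrightarrow> P \<noteq> {}"
  unfolding components_def by blast

lemma components_disjoint:
  assumes "symp A" and P: "P \<in> components X A" and Q: "Q \<in> components X A"
    and "x \<in> P" "x \<in> Q"
  shows "P = Q"
proof -
  let ?R = "{(u, v). A u v \<and> u \<in> X \<and> v \<in> X}"
  have "sym (?R\<^sup>*)"
    using \<open>symp A\<close> by (intro sym_rtrancl) (auto simp: sym_def dest: sympD)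
  moreover obtain p where "P = {y \<in> X. (p, y) \<in> ?R\<^sup>*}"
    using P unfolding components_def by blast
  moreover obtain q where "Q = {y \<in> X. (q, y) \<in> ?R\<^sup>*}"
    using Q unfolding components_def by blast
  ultimately show ?thesis
    using \<open>x \<in> P\<close> \<open>x \<in> Q\<close> by (auto dest: symD intro: rtrancl_trans)
qed

lemma alignment_strict_po_extension:
  assumes align: "alignment I X lt A prec"
    and spo: "strict_po_on (components X A) prec'"
    and ext: "\<And>P Q. P \<in> components X A \<Longrightarrow> Q \<in> components X A \<Longrightarrow> prec P Q \<Longrightarrow> prec' P Q"
  shows "alignment I X lt A prec'"
proof -
  let ?C = "components X A"
  have sym: "symp A"
    using align unfolding alignment_def simple_graph_def symp_def by (elim conjE) blast
  have P3: "\<forall>P\<in>?C. \<forall>Q\<in>?C. \<forall>x\<in>P. \<forall>y\<in>Q. fst x = fst y \<longrightarrow> lt (fst x) x y \<longrightarrow> prec P Q"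
    using align unfolding alignment_def by (elim conjE)
  have P3': "\<forall>P\<in>?C. \<forall>Q\<in>?C. \<forall>x\<in>P. \<forall>y\<in>Q. fst x = fst y \<longrightarrow> lt (fst x) x y \<longrightarrow> prec' P Q"
    using P3 ext by blast
  have P4': "lt (fst x) x y \<or> (x \<noteq> y \<and> \<not> lt (fst x) x y \<and> \<not> lt (fst x) y x)"
    if P: "P \<in> ?C" and Q: "Q \<in> ?C" and "prec' P Q"
      and x: "x \<in> P" and y: "y \<in> Q" and "fst x = fst y" for P Q x y
  proof -
    have "x \<noteq> y"
    proof
      assume "x = y"
      then have "P = Q" using components_disjoint[OF sym P Q x] y by blast
      then show False using strict_po_onD_irrefl[OF spo P] \<open>prec' P Q\<close> by blast
    qed
    moreover have "\<not> lt (fst x) y x"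
    proof
      assume "lt (fst x) y x"
      then have "prec' Q P" using P3 P Q x y \<open>fst x = fst y\<close> ext[OF Q P] by auto
      then show False using strict_po_on_asym[OF spo P Q \<open>prec' P Q\<close>] by blast
    qed
    ultimately show ?thesis by blast
  qed
  show ?thesis
    using align unfolding alignment_def
  proof (elim conjE, intro conjI spo P3')
    show "\<forall>P\<in>?C. \<forall>Q\<in>?C. prec' P Q \<longrightarrow> (\<forall>x\<in>P. \<forall>y\<in>Q. fst x = fst y \<longrightarrow>
        lt (fst x) x y \<or> (x \<noteq> y \<and> \<not> lt (fst x) x y \<and> \<not> lt (fst x) y x))"
      using P4' by blast
  qed
qed

theorem lemma6:
  fixes I :: "'r set" and X :: "('r \<times> 'e) set"
    and lt :: "'r \<Rightarrow> ('r \<times> 'e) \<Rightarrow> ('r \<times> 'e) \<Rightarrow> bool"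
    and A :: "('r \<times> 'e) \<Rightarrow> ('r \<times> 'e) \<Rightarrow> bool"
    and prec :: "('r \<times> 'e) set \<Rightarrow> ('r \<times> 'e) set \<Rightarrow> bool"
    and \<Q> :: "('r \<times> 'e) set set"
    and tri :: "('r \<times> 'e) set \<Rightarrow> ('r \<times> 'e) set \<Rightarrow> bool"
  assumes fam: "family I X lt" \<comment> \<open>not needed: only (P3) and (P4) refer to the row orders\<close>
    and align: "alignment I X lt A prec"
    and part: "partition_on X \<Q>"
    and cols_in_blocks: "\<forall>P\<in>components X A. \<exists>Y\<in>\<Q>. P \<subseteq> Y"
    and tri_spo: "strict_po_on \<Q> tri"
    and tri_compat: "\<forall>Y'\<in>\<Q>. \<forall>Y''\<in>\<Q>. Y' \<noteq> Y'' \<longrightarrow>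
        (\<exists>P\<in>components X A. \<exists>Q\<in>components X A. P \<subseteq> Y' \<and> Q \<subseteq> Y'' \<and> prec P Q) \<longrightarrow> tri Y' Y''"
  defines "prec' \<equiv> \<lambda>P Q. (\<exists>Y\<in>\<Q>. P \<subseteq> Y \<and> Q \<subseteq> Y \<and> prec P Q) \<or>
        (\<exists>Y'\<in>\<Q>. \<exists>Y''\<in>\<Q>. P \<subseteq> Y' \<and> Q \<subseteq> Y'' \<and> tri Y' Y'')"
  shows "strict_po_on (components X A) prec' \<and>
         (\<forall>P\<in>components X A. \<forall>Q\<in>components X A. prec P Q \<longrightarrow> prec' P Q) \<and>
         alignment I X lt A prec'"
proof -
  let ?C = "components X A"
  obtain blk where blk: "\<And>P. P \<in> ?C \<Longrightarrow> blk P \<in> \<Q> \<and> P \<subseteq> blk P"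
    using cols_in_blocks by (metis bchoice)
  have blk_iff: "Y \<in> \<Q> \<and> P \<subseteq> Y \<longleftrightarrow> Y = blk P" if P: "P \<in> ?C" for P Y
    using partition_on_block_unique[OF part components_nonempty[OF P]] blk[OF P] by blast
  have prec'_eq: "prec' P Q \<longleftrightarrow> block_order blk prec tri P Q" if "P \<in> ?C" "Q \<in> ?C" for P Q
    unfolding prec'_def block_order_def
    using blk_iff[OF \<open>P \<in> ?C\<close>] blk_iff[OF \<open>Q \<in> ?C\<close>] by metis
  have "strict_po_on ?C prec"
    using align unfolding alignment_def by (elim conjE)
  moreover have "blk ` ?C \<subseteq> \<Q>"
    using blk by blast
  ultimately have "strict_po_on ?C (block_order blk prec tri)"
    by (rule strict_po_on_block_order[OF _ tri_spo])
  then have spo: "strict_po_on ?C prec'"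
    using strict_po_on_cong[of ?C prec'] prec'_eq by blast
  have compat: "tri (blk P) (blk Q)"
    if "P \<in> ?C" "Q \<in> ?C" "prec P Q" "blk P \<noteq> blk Q" for P Q
    using tri_compat[rule_format, of "blk P" "blk Q"] blk that by blast
  have ext: "prec' P Q" if "P \<in> ?C" "Q \<in> ?C" "prec P Q" for P Q
    using block_order_extends[of ?C prec blk tri, OF compat that] prec'_eq that by blast
  show ?thesis
    using spo ext alignment_strict_po_extension[OF align spo ext] by blast
qed

end
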